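(* Let $\Omega$ be a Polish space and $\mathcal{P}$ a weakly relatively compact set of Borel probability measures on $\Omega$. There is a countable subset $\mathcal{Q}=\{P_n,\ n\in\mathbb{N}\}$ of $\mathcal{P}$ such that for every $p\in[1,\infty)$ and every $X\in L^1(c_{p,\mathcal{P}})$, $$c_{p,\mathcal{P}}(X)=\sup_{n\in\mathbb{N}}\big(E_{P_n}(|X|^p)\big)^{1/p}.$$ Moreover the capacities $c_{p,\mathcal{P}}$ and $c_{p,\mathcal{Q}}$ (defined on $\mathcal{C}_b(\Omega)$ and extended to all real functions) are equal, and $L^1(c_{p,\mathcal{P}})=L^1(c_{p,\mathcal{Q}})$.
   Context: For a set $\mathcal{R}$ of Borel probability measures and $1\le p<\infty$, $c_{p,\mathcal{R}}(f)=\sup_{P\in\mathcal{R}}E_P(|f|^p)^{1/p}$ for $f\in\mathcal{C}_b(\Omega)$ (a capacity when $\mathcal{R}$ is weakly relatively compact: a monotone seminorm with $\inf_n c(f_n)=0$ for $f_n$ decreasing to $0$). It is extended to all real functions by $c(f)=\sup\{c(\varphi):\varphi\in\mathcal{C}_b(\Omega),0\le\varphi\le f\}$ for $f\ge0$ lower semicontinuous and $c(g)=\inf\{c(f):f\text{ l.s.c.},f\ge|g|\}$ in general. $L^1(c)$ denotes the Banach space obtained as the quotient by $c$-null elements of the closure of $\mathcal{C}_b(\Omega)$ for $c$ in $\{g: c(g)<\infty\}$. Weak topology: the coarsest making $\mu\mapsto\int f\,d\mu$ continuous for every $f\in\mathcal{C}_b(\Omega)$. *)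

theory Defs
  imports "HOL-Probability.Probability"
begin

definition Cb :: "('a::topological_space \<Rightarrow> real) set" where
  "Cb = {f. continuous_on UNIV f \<and> bounded (range f)}"

definition borel_prob_measures :: "'a::topological_space measure set" where
  "borel_prob_measures = {M. prob_space M \<and> sets M = sets borel}"

(* weak topology: coarsest topology on the Borel probability measures making
   M \<mapsto> \<integral> f dM continuous for every f in C_b *)
definition weak_topology :: "'a::topological_space measure topology" where
  "weak_topology = pullback_topology borel_prob_measures
      (\<lambda>M. \<lambda>f\<in>Cb. integral\<^sup>L M f) (product_topology (\<lambda>_. euclideanreal) Cb)"

definition weakly_rel_compact :: "'a::topological_space measure set \<Rightarrow> bool" where
  "weakly_rel_compact R \<longleftrightarrow> compactin weak_topology (weak_topology closure_of R)"

definition ennroot :: "real \<Rightarrow> ennreal \<Rightarrow> ennreal" where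
  "ennroot p x = (if x = \<top> then \<top> else ennreal (enn2real x powr (1 / p)))"

definition Epow :: "real \<Rightarrow> 'a measure \<Rightarrow> ('a \<Rightarrow> real) \<Rightarrow> ennreal" where
  "Epow p P f = ennroot p (\<integral>\<^sup>+ x. ennreal (\<bar>f x\<bar> powr p) \<partial>P)"

definition cap_Cb :: "real \<Rightarrow> 'a measure set \<Rightarrow> ('a \<Rightarrow> real) \<Rightarrow> ennreal" where
  "cap_Cb p R f = (SUP P\<in>R. Epow p P f)"

definition lsc :: "('a::topological_space \<Rightarrow> real) \<Rightarrow> bool" where
  "lsc f \<longleftrightarrow> (\<forall>t. open {x. t < f x})"

(* extension to nonnegative lower semicontinuous functions *)
definition cap_lsc :: "real \<Rightarrow> 'a::topological_space measure set \<Rightarrow> ('a \<Rightarrow> real) \<Rightarrow> ennreal" where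
  "cap_lsc p R f = (SUP \<phi>\<in>{\<phi>\<in>Cb. \<forall>x. 0 \<le> \<phi> x \<and> \<phi> x \<le> f x}. cap_Cb p R \<phi>)"

definition cap :: "real \<Rightarrow> 'a::topological_space measure set \<Rightarrow> ('a \<Rightarrow> real) \<Rightarrow> ennreal" where
  "cap p R g = (INF f\<in>{f. lsc f \<and> (\<forall>x. \<bar>g x\<bar> \<le> f x)}. cap_lsc p R f)"

(* representatives of L^1(c_{p,R}): closure of C_b in {g. c g < \<infinity>} for the seminorm c *)
definition L1_set :: "real \<Rightarrow> 'a::topological_space measure set \<Rightarrow> ('a \<Rightarrow> real) set" where
  "L1_set p R = {g. cap p R g < \<top> \<and> (\<forall>e>0. \<exists>\<phi>\<in>Cb. cap p R (\<lambda>x. g x - \<phi> x) < e)}"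

end

(*
  On a Polish space countably many functions in C_b separate Borel probability measures, so
  integration against them maps the weak closure of P continuously and injectively into the
  separable space R^N.  Take a countable Q in P whose image is dense in the image of P.  If
  some M in P had int g dM > t >= int g dN for all N in Q, the compact set of measures in the
  weak closure with int g <= t would have a closed image containing the image of Q, hence that
  of M, contradicting injectivity.  So sup over Q and over P of int g agree for g in C_b, and
  with g = |phi|^p the capacities agree on C_b and therefore everywhere.

  On a nonnegative lower semicontinuous f the capacity is sup_P E(f^p)^(1/p), by monotone
  convergence along the increasing Lipschitz approximations inf_y (f y + n d(x,y)).  For X in
  L^1 pick phi in C_b and a lower semicontinuous g >= |X - phi| of small capacity; Minkowski's
  inequality, once for |phi| + g over P and once for phi <= |X| + g over Q, gives
  c(X) <= sup_Q E(|X|^p)^(1/p) + 2 c(g).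
*)
theory Submission
  imports Defs
begin

lemma powr_le_powr_iff:
  fixes x y a :: real
  assumes "0 < a" "0 \<le> x" "0 \<le> y"
  shows "x powr a \<le> y powr a \<longleftrightarrow> x \<le> y"
  using assms by (meson not_le powr_less_mono2 powr_mono2 less_imp_le)

lemma ennroot_le_ennreal_iff:
  assumes "0 < p" "0 \<le> y"
  shows "ennroot p a \<le> ennreal y \<longleftrightarrow> a \<le> ennreal (y powr p)"
proof (cases a)
  case (real x)
  have "x powr (1/p) \<le> y \<longleftrightarrow> (x powr (1/p)) powr p \<le> y powr p"
    using assms by (simp add: powr_le_powr_iff)
  then show ?thesis
    using real assms by (auto simp: ennroot_def ennreal_le_iff powr_powr)
qed (simp add: ennroot_def top_unique)

lemma ennroot_mono: "0 < p \<Longrightarrow> a \<le> b \<Longrightarrow> ennroot p a \<le> ennroot p b"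
  by (cases a; cases b) (auto simp: ennroot_def ennreal_le_iff top_unique intro!: ennreal_leI powr_mono2)

lemma ennroot_SUP:
  assumes "0 < p"
  shows "ennroot p (SUP i\<in>I. a i) = (SUP i\<in>I. ennroot p (a i))"
proof (rule antisym)
  show "(SUP i\<in>I. ennroot p (a i)) \<le> ennroot p (SUP i\<in>I. a i)"
    using assms by (intro SUP_least ennroot_mono SUP_upper)
  show "ennroot p (SUP i\<in>I. a i) \<le> (SUP i\<in>I. ennroot p (a i))"
  proof (cases "SUP i\<in>I. ennroot p (a i)")
    case (real s)
    then have "ennroot p (a i) \<le> ennreal s" if "i \<in> I" for i
      using that by (metis SUP_upper)
    then show ?thesis
      using real assms by (simp add: ennroot_le_ennreal_iff SUP_least)
  qed (metis top_greatest)
qed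

lemma Epow_mono:
  assumes "0 < p" "\<And>x. \<bar>u x\<bar> \<le> \<bar>v x\<bar>"
  shows "Epow p M u \<le> Epow p M v"
  unfolding Epow_def using assms
  by (intro ennroot_mono nn_integral_mono ennreal_leI powr_mono2) auto

lemma Epow_le_ennreal_iff:
  assumes "0 < p" "0 < c" "f \<in> borel_measurable M"
  shows "Epow p M f \<le> ennreal c \<longleftrightarrow> (\<integral>\<^sup>+ x. ennreal ((\<bar>f x\<bar> / c) powr p) \<partial>M) \<le> 1"
proof -
  have "(\<integral>\<^sup>+ x. ennreal ((\<bar>f x\<bar> / c) powr p) \<partial>M) = (\<integral>\<^sup>+ x. ennreal (\<bar>f x\<bar> powr p) \<partial>M) / ennreal (c powr p)"
    using assms by (simp add: powr_divide divide_ennreal[symmetric] nn_integral_divide)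
  moreover have "x / ennreal (c powr p) \<le> 1 \<longleftrightarrow> x \<le> ennreal (c powr p)" for x
    using assms
    by (smt (verit, best) divide_eq_1_ennreal divide_right_mono_ennreal
        ennreal_divide_self ennreal_eq_0_iff ennreal_less_top nle_le powr_gt_zero)
  ultimately show ?thesis
    using assms by (simp add: Epow_def ennroot_le_ennreal_iff)
qed

lemma convex_on_powr_nonneg:
  assumes "1 \<le> p"
  shows "convex_on {0..} (\<lambda>x::real. x powr p)"
proof
  have scale: "(s * z) powr p \<le> s * z powr p" if "0 < s" "s \<le> 1" for s z :: real
    using powr_le_one_le[OF that assms] by (simp add: powr_mult mult_right_mono)
  fix t x y :: real
  assume t: "0 < t" "t < 1" and xy: "x \<in> {0..}" "y \<in> {0..}"
  show "((1 - t) *\<^sub>R x + t *\<^sub>R y) powr p \<le> (1 - t) * x powr p + t * y powr p"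
  proof (cases "x = 0 \<or> y = 0")
    case True
    then show ?thesis using scale[of t y] scale[of "1 - t" x] t by auto
  next
    case False
    then show ?thesis using convex_onD[OF powr_convex[OF assms], of t x y] t xy by auto
  qed
qed simp

lemma powr_add_le_weighted:
  fixes a b u v p :: real
  assumes "0 < a" "0 < b" "0 \<le> u" "0 \<le> v" "1 \<le> p"
  shows "((u + v) / (a + b)) powr p \<le> a / (a + b) * (u / a) powr p + b / (a + b) * (v / b) powr p"
proof -
  define t where "t = b / (a + b)"
  have t: "0 \<le> t" "t \<le> 1" "a / (a + b) = 1 - t"
    using assms by (auto simp: t_def field_simps)
  have "(u + v) / (a + b) = (1 - t) * (u / a) + t * (v / b)"
    unfolding t(3)[symmetric] using assms by (simp add: t_def add_divide_distrib)
  then show ?thesis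
    unfolding t_def[symmetric] t(3)
    using convex_onD[OF convex_on_powr_nonneg[OF assms(5)], of t "u / a" "v / b"] t assms by simp
qed

text \<open>Convexity of the unit ball of \<open>L\<^sup>p\<close>, the normalised form of Minkowski's inequality.\<close>

lemma nn_integral_powr_add_le_1:
  assumes "1 \<le> p" "0 < a" "0 < b"
    and "u \<in> borel_measurable M" "\<And>x. 0 \<le> u x" "(\<integral>\<^sup>+ x. ennreal ((u x / a) powr p) \<partial>M) \<le> 1"
    and "v \<in> borel_measurable M" "\<And>x. 0 \<le> v x" "(\<integral>\<^sup>+ x. ennreal ((v x / b) powr p) \<partial>M) \<le> 1"
  shows "(\<integral>\<^sup>+ x. ennreal (((u x + v x) / (a + b)) powr p) \<partial>M) \<le> 1"
proof -
  have "(\<integral>\<^sup>+ x. ennreal (((u x + v x) / (a + b)) powr p) \<partial>M)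
      \<le> (\<integral>\<^sup>+ x. ennreal (a / (a + b)) * ennreal ((u x / a) powr p)
               + ennreal (b / (a + b)) * ennreal ((v x / b) powr p) \<partial>M)"
    using assms powr_add_le_weighted[OF assms(2,3)]
    by (intro nn_integral_mono) (simp add: ennreal_mult[symmetric] ennreal_plus[symmetric] del: ennreal_plus)
  also have "\<dots> = ennreal (a / (a + b)) * (\<integral>\<^sup>+ x. ennreal ((u x / a) powr p) \<partial>M)
      + ennreal (b / (a + b)) * (\<integral>\<^sup>+ x. ennreal ((v x / b) powr p) \<partial>M)"
    using assms by (simp add: nn_integral_add nn_integral_cmult)
  also have "\<dots> \<le> ennreal (a / (a + b)) * 1 + ennreal (b / (a + b)) * 1"
    using assms by (intro add_mono mult_left_mono) auto
  also have "\<dots> = 1"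
    using assms by (simp add: ennreal_plus[symmetric] add_divide_distrib[symmetric] del: ennreal_plus)
  finally show ?thesis .
qed

lemma Epow_add_le:
  assumes p: "1 \<le> p"
    and u: "u \<in> borel_measurable M" "\<And>x. 0 \<le> u x"
    and v: "v \<in> borel_measurable M" "\<And>x. 0 \<le> v x"
  shows "Epow p M (\<lambda>x. u x + v x) \<le> Epow p M u + Epow p M v"
proof (cases "Epow p M u = \<top> \<or> Epow p M v = \<top>")
  case False
  then obtain A B where AB: "Epow p M u = ennreal A" "Epow p M v = ennreal B" "0 \<le> A" "0 \<le> B"
    by (metis ennreal_cases)
  have "Epow p M (\<lambda>x. u x + v x) \<le> ennreal (A + B) + ennreal e" if e: "0 < e" for e
  proof -
    define a b where "a = A + e / 2" and "b = B + e / 2"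
    have ab: "0 < a" "0 < b" "a + b = A + B + e"
      using AB e by (auto simp: a_def b_def)
    have "Epow p M u \<le> ennreal a" "Epow p M v \<le> ennreal b"
      using AB e by (auto simp: a_def b_def)
    then have "(\<integral>\<^sup>+ x. ennreal ((u x / a) powr p) \<partial>M) \<le> 1" "(\<integral>\<^sup>+ x. ennreal ((v x / b) powr p) \<partial>M) \<le> 1"
      using p ab u v by (simp_all add: Epow_le_ennreal_iff)
    then have "(\<integral>\<^sup>+ x. ennreal (((u x + v x) / (a + b)) powr p) \<partial>M) \<le> 1"
      using nn_integral_powr_add_le_1[OF p ab(1,2) u _ v] by blast
    then have "Epow p M (\<lambda>x. u x + v x) \<le> ennreal (a + b)"
      using p ab u v by (simp add: Epow_le_ennreal_iff add_nonneg_nonneg)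
    then show ?thesis
      using ab AB e by (simp flip: ennreal_plus)
  qed
  then show ?thesis
    using AB by (simp flip: ennreal_plus add: ennreal_le_epsilon)
qed auto

definition lipschitz_minorant :: "('a::metric_space \<Rightarrow> real) \<Rightarrow> nat \<Rightarrow> 'a \<Rightarrow> real" where
  "lipschitz_minorant f n x = (INF y. f y + real n * dist x y)"

context
  fixes f :: "'a::metric_space \<Rightarrow> real"
  assumes f_nonneg: "\<And>x. 0 \<le> f x"
begin

lemma lipschitz_minorant_le: "lipschitz_minorant f n x \<le> f y + real n * dist x y"
  unfolding lipschitz_minorant_def
  by (rule cINF_lower) (auto intro!: bdd_belowI[of _ 0] add_nonneg_nonneg f_nonneg)

lemma lipschitz_minorant_greatest:
  "(\<And>y. a \<le> f y + real n * dist x y) \<Longrightarrow> a \<le> lipschitz_minorant f n x"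
  unfolding lipschitz_minorant_def by (rule cINF_greatest) auto

lemma lipschitz_minorant_nonneg: "0 \<le> lipschitz_minorant f n x"
  by (rule lipschitz_minorant_greatest) (simp add: add_nonneg_nonneg f_nonneg)

lemma lipschitz_minorant_le_self: "lipschitz_minorant f n x \<le> f x"
  using lipschitz_minorant_le[of n x x] by simp

lemma lipschitz_minorant_mono:
  assumes "n \<le> m"
  shows "lipschitz_minorant f n x \<le> lipschitz_minorant f m x"
proof (rule lipschitz_minorant_greatest)
  fix y
  have "real n * dist x y \<le> real m * dist x y"
    using assms by (simp add: mult_right_mono)
  then show "lipschitz_minorant f n x \<le> f y + real m * dist x y"
    using lipschitz_minorant_le[of n x y] by linarith
qed

lemma lipschitz_minorant_lipschitz: "(real n)-lipschitz_on UNIV (lipschitz_minorant f n)"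
proof (rule lipschitz_onI)
  have le: "lipschitz_minorant f n x \<le> lipschitz_minorant f n x' + real n * dist x x'" for x x'
  proof -
    have "lipschitz_minorant f n x - real n * dist x x' \<le> lipschitz_minorant f n x'"
    proof (rule lipschitz_minorant_greatest)
      fix y
      have "lipschitz_minorant f n x \<le> f y + real n * dist x y"
        by (rule lipschitz_minorant_le)
      also have "\<dots> \<le> f y + real n * (dist x' y + dist x x')"
        using dist_triangle[of x y x'] by (intro add_left_mono mult_left_mono) (auto simp: dist_commute)
      finally show "lipschitz_minorant f n x - real n * dist x x' \<le> f y + real n * dist x' y"
        by (simp add: algebra_simps)
    qed
    then show ?thesis by simp
  qed
  fix x y :: 'a
  show "dist (lipschitz_minorant f n x) (lipschitz_minorant f n y) \<le> real n * dist x y"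
    using le[of x y] le[of y x] by (simp add: dist_real_def dist_commute abs_le_iff)
qed simp

lemma lipschitz_minorant_tendsto:
  assumes "lsc f"
  shows "(\<lambda>n. lipschitz_minorant f n x) \<longlonglongrightarrow> f x"
proof (rule order_tendstoI)
  fix a assume "f x < a"
  then show "\<forall>\<^sub>F n in sequentially. lipschitz_minorant f n x < a"
    by (intro always_eventually allI le_less_trans[OF lipschitz_minorant_le_self])
next
  fix a assume a: "a < f x"
  define a' where "a' = (a + f x) / 2"
  have a': "a < a'" "a' < f x" using a by (auto simp: a'_def)
  have "open {z. a' < f z}" using assms by (simp add: lsc_def)
  then obtain r where r: "0 < r" "ball x r \<subseteq> {z. a' < f z}"
    using a'(2) by (meson mem_Collect_eq openE)
  obtain N :: nat where N: "a' / r < real N" using reals_Archimedean2 by blast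
  have "a' \<le> lipschitz_minorant f n x" if "N \<le> n" for n
  proof (rule lipschitz_minorant_greatest)
    fix y
    show "a' \<le> f y + real n * dist x y"
    proof (cases "dist x y < r")
      case True
      then show ?thesis using r by (auto intro!: add_increasing2)
    next
      case False
      have "a' < real N * r" using N r by (simp add: field_simps)
      also have "\<dots> \<le> real n * dist x y" using False that r by (intro mult_mono) auto
      finally show ?thesis using f_nonneg[of y] by simp
    qed
  qed
  then show "\<forall>\<^sub>F n in sequentially. a < lipschitz_minorant f n x"
    using a'(1) by (intro eventually_sequentiallyI[of N]) (meson less_le_trans)
qed

end

lemma lsc_Cb_approx:
  fixes f :: "'a::metric_space \<Rightarrow> real"
  assumes "lsc f" and f_nonneg: "\<And>x. 0 \<le> f x"
  obtains \<phi> where "\<And>n. \<phi> n \<in> Cb" "\<And>n x. 0 \<le> \<phi> n x" "\<And>n x. \<phi> n x \<le> f x"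
    "\<And>x. incseq (\<lambda>n. \<phi> n x)" "\<And>x. (\<lambda>n. \<phi> n x) \<longlonglongrightarrow> f x"
proof
  let ?\<psi> = "lipschitz_minorant f"
  define \<phi> where "\<phi> n x = min (real n) (?\<psi> n x)" for n x
  show "\<phi> n \<in> Cb" for n
  proof -
    have "continuous_on UNIV (?\<psi> n)"
      using lipschitz_minorant_lipschitz[of f, OF f_nonneg] by (rule lipschitz_on_continuous_on)
    then have "continuous_on UNIV (\<phi> n)"
      unfolding \<phi>_def by (intro continuous_on_min continuous_on_const)
    moreover have "\<bar>\<phi> n x\<bar> \<le> real n" for x
      using lipschitz_minorant_nonneg[of f n x] f_nonneg by (simp add: \<phi>_def)
    then have "bounded (range (\<phi> n))"
      unfolding bounded_real by blast
    ultimately show ?thesis by (simp add: Cb_def)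
  qed
  show "0 \<le> \<phi> n x" "\<phi> n x \<le> f x" for n x
    using lipschitz_minorant_nonneg[of f, OF f_nonneg] lipschitz_minorant_le_self[of f, OF f_nonneg]
    by (auto simp: \<phi>_def min.coboundedI2)
  show "incseq (\<lambda>n. \<phi> n x)" for x
    unfolding incseq_def \<phi>_def using lipschitz_minorant_mono[of f, OF f_nonneg]
    by (metis min.mono of_nat_mono)
  show "(\<lambda>n. \<phi> n x) \<longlonglongrightarrow> f x" for x
  proof -
    obtain N :: nat where "f x < real N" using reals_Archimedean2 by blast
    then have "\<forall>\<^sub>F n in sequentially. ?\<psi> n x = \<phi> n x"
    proof (intro eventually_sequentiallyI[of N])
      fix n assume "N \<le> n"
      then have "?\<psi> n x \<le> real n"
        using lipschitz_minorant_le_self[of f, OF f_nonneg, of n x] \<open>f x < real N\<close> by linarith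
      then show "?\<psi> n x = \<phi> n x" by (simp add: \<phi>_def)
    qed
    then show ?thesis
      by (rule Lim_transform_eventually[OF lipschitz_minorant_tendsto[of f, OF f_nonneg assms(1)]])
  qed
qed

lemma Cb_borel_measurable: "\<phi> \<in> Cb \<Longrightarrow> sets M = sets borel \<Longrightarrow> \<phi> \<in> borel_measurable M"
  unfolding Cb_def measurable_cong_sets[OF _ refl] by (simp add: borel_measurable_continuous_onI)

lemma lsc_borel_measurable: "lsc g \<Longrightarrow> sets M = sets borel \<Longrightarrow> g \<in> borel_measurable M"
  unfolding lsc_def measurable_cong_sets[OF _ refl] by (simp add: borel_measurable_iff_greater)

lemma lsc_add_continuous:
  fixes c g :: "'a::topological_space \<Rightarrow> real"
  assumes c: "continuous_on UNIV c" and g: "lsc g"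
  shows "lsc (\<lambda>x. c x + g x)"
  unfolding lsc_def
proof
  fix t
  have "{x. t < c x + g x} = (\<Union>s. {x. t - s < c x} \<inter> {x. s < g x})"
  proof safe
    fix x assume "t < c x + g x"
    then show "x \<in> (\<Union>s. {x. t - s < c x} \<inter> {x. s < g x})"
      by (intro UN_I[of "g x - (c x + g x - t) / 2"]) (auto simp: field_simps)
  qed auto
  moreover have "open {x. t - s < c x}" "open {x. s < g x}" for s
    using c g by (auto simp: lsc_def intro!: open_Collect_less continuous_on_const)
  ultimately show "open {x. t < c x + g x}" by (simp add: open_UN open_Int)
qed

lemma Cb_abs_powr: "\<phi> \<in> Cb \<Longrightarrow> 0 < p \<Longrightarrow> (\<lambda>x. \<bar>\<phi> x\<bar> powr p) \<in> Cb"
proof -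
  assume "\<phi> \<in> Cb" "0 < p"
  then obtain B where c: "continuous_on UNIV \<phi>" and B: "\<And>x. \<bar>\<phi> x\<bar> \<le> B"
    unfolding Cb_def bounded_real by auto
  have "continuous_on UNIV (\<lambda>x. \<bar>\<phi> x\<bar> powr p)"
    using \<open>0 < p\<close> by (intro continuous_on_powr' continuous_on_rabs c continuous_on_const) auto
  moreover have "\<bar>\<bar>\<phi> x\<bar> powr p\<bar> \<le> B powr p" for x
    using B \<open>0 < p\<close> by (simp add: powr_mono2)
  ultimately show ?thesis
    unfolding Cb_def bounded_real by blast
qed

lemma nn_integral_Cb_eq_integral:
  assumes "\<phi> \<in> Cb" "M \<in> borel_prob_measures" "\<And>x. 0 \<le> \<phi> x"
  shows "(\<integral>\<^sup>+ x. ennreal (\<phi> x) \<partial>M) = ennreal (integral\<^sup>L M \<phi>)"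
proof -
  interpret prob_space M using assms(2) by (simp add: borel_prob_measures_def)
  obtain B where B: "\<And>x. \<bar>\<phi> x\<bar> \<le> B" using assms(1) unfolding Cb_def bounded_real by auto
  have "\<phi> \<in> borel_measurable M"
    using assms(1,2) by (simp add: Cb_borel_measurable borel_prob_measures_def)
  then have "integrable M \<phi>"
    using B by (intro integrable_const_bound[where B=B]) auto
  then show ?thesis using assms(3) by (simp add: nn_integral_eq_integral)
qed

lemma Epow_Cb_eq:
  assumes "\<phi> \<in> Cb" "0 < p" "M \<in> borel_prob_measures"
  shows "Epow p M \<phi> = ennroot p (ennreal (integral\<^sup>L M (\<lambda>x. \<bar>\<phi> x\<bar> powr p)))"
  unfolding Epow_def using assms by (simp add: nn_integral_Cb_eq_integral Cb_abs_powr)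

lemma Epow_SUP_incseq:
  assumes "0 < p" and meas: "\<And>n. \<phi> n \<in> borel_measurable M"
    and nonneg: "\<And>n x. 0 \<le> \<phi> n x" and inc: "\<And>x. incseq (\<lambda>n. \<phi> n x)"
    and lim: "\<And>x. (\<lambda>n. \<phi> n x) \<longlonglongrightarrow> f x"
  shows "Epow p M f = (SUP n. Epow p M (\<phi> n))"
proof -
  have inc_powr: "incseq (\<lambda>n x. ennreal (\<bar>\<phi> n x\<bar> powr p))"
    using inc nonneg \<open>0 < p\<close> by (auto simp: incseq_def le_fun_def intro!: ennreal_leI powr_mono2)
  have "(SUP n. ennreal (\<bar>\<phi> n x\<bar> powr p)) = ennreal (\<bar>f x\<bar> powr p)" for x
  proof (rule LIMSEQ_unique)
    show "(\<lambda>n. ennreal (\<bar>\<phi> n x\<bar> powr p)) \<longlonglongrightarrow> (SUP n. ennreal (\<bar>\<phi> n x\<bar> powr p))"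
      using inc_powr by (intro LIMSEQ_SUP) (auto simp: incseq_def le_fun_def)
    show "(\<lambda>n. ennreal (\<bar>\<phi> n x\<bar> powr p)) \<longlonglongrightarrow> ennreal (\<bar>f x\<bar> powr p)"
      using \<open>0 < p\<close> by (intro tendsto_ennrealI tendsto_powr' tendsto_rabs lim) auto
  qed
  then have "Epow p M f = ennroot p (\<integral>\<^sup>+ x. (SUP n. ennreal (\<bar>\<phi> n x\<bar> powr p)) \<partial>M)"
    by (simp add: Epow_def)
  also have "\<dots> = ennroot p (SUP n. \<integral>\<^sup>+ x. ennreal (\<bar>\<phi> n x\<bar> powr p) \<partial>M)"
    using meas by (simp add: nn_integral_monotone_convergence_SUP[OF inc_powr])
  also have "\<dots> = (SUP n. Epow p M (\<phi> n))"
    by (simp add: ennroot_SUP[OF \<open>0 < p\<close>] Epow_def)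
  finally show ?thesis .
qed

lemma cap_lsc_eq_SUP_Epow:
  fixes f :: "'a::metric_space \<Rightarrow> real"
  assumes "0 < p" and R: "\<And>M. M \<in> R \<Longrightarrow> sets M = sets borel"
    and "lsc f" and f_nonneg: "\<And>x. 0 \<le> f x"
  shows "cap_lsc p R f = (SUP M\<in>R. Epow p M f)"
proof (rule antisym)
  show "cap_lsc p R f \<le> (SUP M\<in>R. Epow p M f)"
    unfolding cap_lsc_def cap_Cb_def using \<open>0 < p\<close>
    by (intro SUP_least SUP_mono' Epow_mono) (auto intro: f_nonneg order.trans)
  obtain \<phi> where \<phi>: "\<And>n. \<phi> n \<in> Cb" "\<And>n x. 0 \<le> \<phi> n x" "\<And>n x. \<phi> n x \<le> f x"
    "\<And>x. incseq (\<lambda>n. \<phi> n x)" "\<And>x. (\<lambda>n. \<phi> n x) \<longlonglongrightarrow> f x"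
    using lsc_Cb_approx[OF \<open>lsc f\<close> f_nonneg] by blast
  have "Epow p M f \<le> cap_lsc p R f" if M: "M \<in> R" for M
  proof -
    have "Epow p M f = (SUP n. Epow p M (\<phi> n))"
      by (rule Epow_SUP_incseq[OF \<open>0 < p\<close> Cb_borel_measurable[OF \<phi>(1) R[OF M]] \<phi>(2,4,5)])
    also have "\<dots> \<le> (SUP n. cap_Cb p R (\<phi> n))"
      unfolding cap_Cb_def using M by (intro SUP_mono) (auto intro: SUP_upper)
    also have "\<dots> \<le> cap_lsc p R f"
      unfolding cap_lsc_def using \<phi>(1-3) by (intro SUP_least SUP_upper) auto
    finally show ?thesis .
  qed
  then show "(SUP M\<in>R. Epow p M f) \<le> cap_lsc p R f"
    by (rule SUP_least)
qed

lemma Epow_le_cap_lsc: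
  fixes f :: "'a::metric_space \<Rightarrow> real"
  assumes "0 < p" and R: "\<And>M. M \<in> R \<Longrightarrow> sets M = sets borel"
    and "lsc f" "\<And>x. 0 \<le> f x" "M \<in> R"
  shows "Epow p M f \<le> cap_lsc p R f"
proof -
  have "Epow p M f \<le> (SUP M\<in>R. Epow p M f)"
    using \<open>M \<in> R\<close> by (rule SUP_upper)
  also have "\<dots> = cap_lsc p R f"
    using assms by (intro cap_lsc_eq_SUP_Epow[symmetric]) auto
  finally show ?thesis .
qed

lemma Epow_le_cap:
  fixes X :: "'a::metric_space \<Rightarrow> real"
  assumes "0 < p" and R: "\<And>M. M \<in> R \<Longrightarrow> sets M = sets borel" and "M \<in> R"
  shows "Epow p M X \<le> cap p R X"
  unfolding cap_def
proof (rule INF_greatest)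
  fix f assume f: "f \<in> {f. lsc f \<and> (\<forall>x. \<bar>X x\<bar> \<le> f x)}"
  then have f_nonneg: "0 \<le> f x" for x
    using abs_ge_zero order.trans by blast
  have "Epow p M X \<le> Epow p M f"
    using f \<open>0 < p\<close> by (intro Epow_mono) (auto intro: order.trans[OF _ abs_ge_self])
  also have "\<dots> \<le> cap_lsc p R f"
    using f f_nonneg assms by (intro Epow_le_cap_lsc) auto
  finally show "Epow p M X \<le> cap_lsc p R f" .
qed

definition sup_integral_dense :: "'a::topological_space measure set \<Rightarrow> 'a measure set \<Rightarrow> bool" where
  "sup_integral_dense \<Q> \<P> \<longleftrightarrow>
     (\<forall>g\<in>Cb. \<forall>M\<in>\<P>. \<forall>t. t < integral\<^sup>L M g \<longrightarrow> (\<exists>N\<in>\<Q>. t < integral\<^sup>L N g))"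

lemma cap_Cb_eq_if_sup_integral_dense:
  assumes "0 < p" and "\<Q> \<subseteq> \<P>" "\<P> \<subseteq> borel_prob_measures"
    and dense: "sup_integral_dense \<Q> \<P>"
    and "\<phi> \<in> Cb"
  shows "cap_Cb p \<P> \<phi> = cap_Cb p \<Q> \<phi>"
proof (rule antisym)
  show "cap_Cb p \<Q> \<phi> \<le> cap_Cb p \<P> \<phi>"
    unfolding cap_Cb_def using \<open>\<Q> \<subseteq> \<P>\<close> by (rule SUP_subset_mono) simp
  show "cap_Cb p \<P> \<phi> \<le> cap_Cb p \<Q> \<phi>"
    unfolding cap_Cb_def
  proof (rule SUP_least)
    fix M assume M: "M \<in> \<P>"
    show "Epow p M \<phi> \<le> (SUP N\<in>\<Q>. Epow p N \<phi>)"
    proof (cases "SUP N\<in>\<Q>. Epow p N \<phi>")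
      case (real s)
      let ?g = "\<lambda>x. \<bar>\<phi> x\<bar> powr p"
      have le_iff: "Epow p N \<phi> \<le> ennreal s \<longleftrightarrow> integral\<^sup>L N ?g \<le> s powr p" if "N \<in> \<P>" for N
        using that assms real by (auto simp: Epow_Cb_eq ennroot_le_ennreal_iff ennreal_le_iff)
      have "integral\<^sup>L N ?g \<le> s powr p" if "N \<in> \<Q>" for N
        using that le_iff real \<open>\<Q> \<subseteq> \<P>\<close> by (metis SUP_upper subsetD)
      then have "integral\<^sup>L M ?g \<le> s powr p"
        using dense Cb_abs_powr[OF \<open>\<phi> \<in> Cb\<close> \<open>0 < p\<close>] M
        unfolding sup_integral_dense_def by (meson not_le)
      then show ?thesis
        using le_iff M real by simp
    qed (metis top_greatest)
  qed
qed

lemma cap_eq_if_sup_integral_dense: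
  assumes "0 < p" and "\<Q> \<subseteq> \<P>" "\<P> \<subseteq> borel_prob_measures"
    and "sup_integral_dense \<Q> \<P>"
  shows "cap p \<P> = cap p \<Q>"
  unfolding cap_def cap_lsc_def
  using cap_Cb_eq_if_sup_integral_dense[OF assms] by (intro ext INF_cong SUP_cong) auto

text \<open>The negative part of \<open>\<bar>\<phi>\<bar> - g\<close> is cut off because \<open>X\<close> need not be measurable.\<close>

lemma Epow_Cb_le_Epow_add:
  assumes "1 \<le> p" "sets M = sets borel" "\<phi> \<in> Cb" "lsc g" and X: "\<And>x. \<bar>X x - \<phi> x\<bar> \<le> g x"
  shows "Epow p M \<phi> \<le> Epow p M X + Epow p M g"
proof -
  have g_nonneg: "0 \<le> g x" for x
    using X abs_ge_zero order.trans by blast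
  have [measurable]: "\<phi> \<in> borel_measurable M" "g \<in> borel_measurable M"
    using assms by (simp_all add: Cb_borel_measurable lsc_borel_measurable)
  have "Epow p M \<phi> \<le> Epow p M (\<lambda>x. max 0 (\<bar>\<phi> x\<bar> - g x) + g x)"
    using assms g_nonneg by (intro Epow_mono) auto
  also have "\<dots> \<le> Epow p M (\<lambda>x. max 0 (\<bar>\<phi> x\<bar> - g x)) + Epow p M g"
    using assms g_nonneg by (intro Epow_add_le) auto
  also have "\<dots> \<le> Epow p M X + Epow p M g"
  proof (intro add_right_mono Epow_mono)
    show "\<bar>max 0 (\<bar>\<phi> x\<bar> - g x)\<bar> \<le> \<bar>X x\<bar>" for x
      using X[of x] by (smt (verit))
  qed (use assms in simp)
  finally show ?thesis .
qed

lemma cap_le_cap_Cb_add_cap_lsc: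
  fixes R :: "'a::metric_space measure set"
  assumes p: "1 \<le> p" and R: "\<And>M. M \<in> R \<Longrightarrow> sets M = sets borel"
    and "\<phi> \<in> Cb" "lsc g" and X: "\<And>x. \<bar>X x - \<phi> x\<bar> \<le> g x"
  shows "cap p R X \<le> cap_Cb p R \<phi> + cap_lsc p R g"
proof -
  have g_nonneg: "0 \<le> g x" for x
    using X abs_ge_zero order.trans by blast
  have lsc: "lsc (\<lambda>x. \<bar>\<phi> x\<bar> + g x)"
    using assms by (auto simp: Cb_def intro!: lsc_add_continuous continuous_on_rabs)
  have "\<bar>X x\<bar> \<le> \<bar>\<phi> x\<bar> + g x" for x
    using X[of x] by (smt (verit))
  then have "cap p R X \<le> cap_lsc p R (\<lambda>x. \<bar>\<phi> x\<bar> + g x)"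
    unfolding cap_def using lsc by (intro INF_lower) auto
  also have "\<dots> = (SUP M\<in>R. Epow p M (\<lambda>x. \<bar>\<phi> x\<bar> + g x))"
    using p lsc g_nonneg by (intro cap_lsc_eq_SUP_Epow[OF _ R]) (auto intro: add_nonneg_nonneg)
  also have "\<dots> \<le> cap_Cb p R \<phi> + cap_lsc p R g"
  proof (rule SUP_least)
    fix M assume M: "M \<in> R"
    have "Epow p M (\<lambda>x. \<bar>\<phi> x\<bar> + g x) \<le> Epow p M (\<lambda>x. \<bar>\<phi> x\<bar>) + Epow p M g"
      using assms g_nonneg Cb_borel_measurable[OF _ R[OF M]] lsc_borel_measurable[OF _ R[OF M]]
      by (intro Epow_add_le) auto
    also have "\<dots> \<le> cap_Cb p R \<phi> + cap_lsc p R g"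
      unfolding cap_Cb_def using M p assms g_nonneg
      by (intro add_mono SUP_upper2[OF M] Epow_le_cap_lsc[OF _ R]) (auto simp: Epow_def)
    finally show "Epow p M (\<lambda>x. \<bar>\<phi> x\<bar> + g x) \<le> cap_Cb p R \<phi> + cap_lsc p R g" .
  qed
  finally show ?thesis .
qed

lemma cap_Cb_le_SUP_Epow_add_cap_lsc:
  fixes R :: "'a::metric_space measure set"
  assumes p: "1 \<le> p" and R: "\<And>M. M \<in> R \<Longrightarrow> sets M = sets borel"
    and "\<phi> \<in> Cb" "lsc g" and X: "\<And>x. \<bar>X x - \<phi> x\<bar> \<le> g x"
  shows "cap_Cb p R \<phi> \<le> (SUP N\<in>R. Epow p N X) + cap_lsc p R g"
  unfolding cap_Cb_def
proof (rule SUP_least)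
  fix N assume N: "N \<in> R"
  have g_nonneg: "0 \<le> g x" for x
    using X abs_ge_zero order.trans by blast
  have "Epow p N \<phi> \<le> Epow p N X + Epow p N g"
    using p R[OF N] assms(3-5) by (rule Epow_Cb_le_Epow_add)
  also have "\<dots> \<le> (SUP N\<in>R. Epow p N X) + cap_lsc p R g"
    using N p assms g_nonneg by (intro add_mono SUP_upper Epow_le_cap_lsc[OF _ R]) auto
  finally show "Epow p N \<phi> \<le> (SUP N\<in>R. Epow p N X) + cap_lsc p R g" .
qed

lemma cap_eq_SUP_Epow_if_sup_integral_dense:
  fixes \<P> :: "'a::metric_space measure set"
  assumes p: "1 \<le> p" and "\<Q> \<subseteq> \<P>" "\<P> \<subseteq> borel_prob_measures"
    and dense: "sup_integral_dense \<Q> \<P>"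
    and X: "X \<in> L1_set p \<P>"
  shows "cap p \<P> X = (SUP N\<in>\<Q>. Epow p N X)"
proof (rule antisym)
  have sets: "\<And>M. M \<in> \<P> \<Longrightarrow> sets M = sets borel"
    using assms by (auto simp: borel_prob_measures_def)
  show "(SUP N\<in>\<Q>. Epow p N X) \<le> cap p \<P> X"
    using \<open>\<Q> \<subseteq> \<P>\<close> p by (intro SUP_least Epow_le_cap[OF _ sets]) auto
  define S where "S = (SUP N\<in>\<Q>. Epow p N X)"
  show "cap p \<P> X \<le> S"
  proof (rule ennreal_le_epsilon)
    fix e :: real assume "0 < e"
    then have "0 < ennreal (e / 2)" by simp
    then obtain \<phi> where \<phi>: "\<phi> \<in> Cb" "cap p \<P> (\<lambda>x. X x - \<phi> x) < ennreal (e / 2)"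
      using X unfolding L1_set_def by blast
    then obtain g where g: "lsc g" "\<And>x. \<bar>X x - \<phi> x\<bar> \<le> g x" "cap_lsc p \<P> g < ennreal (e / 2)"
      unfolding cap_def by (auto simp: INF_less_iff)
    have "cap p \<P> X \<le> cap_Cb p \<P> \<phi> + cap_lsc p \<P> g"
      using p sets \<phi>(1) g(1,2) by (rule cap_le_cap_Cb_add_cap_lsc)
    also have "cap_Cb p \<P> \<phi> = cap_Cb p \<Q> \<phi>"
      using p assms(2,3) dense \<phi>(1) by (intro cap_Cb_eq_if_sup_integral_dense) auto
    also have "\<dots> \<le> S + cap_lsc p \<Q> g"
      unfolding S_def using p sets \<open>\<Q> \<subseteq> \<P>\<close> \<phi>(1) g(1,2)
      by (intro cap_Cb_le_SUP_Epow_add_cap_lsc) auto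
    also have "cap_lsc p \<Q> g \<le> cap_lsc p \<P> g"
      unfolding cap_lsc_def cap_Cb_def using \<open>\<Q> \<subseteq> \<P>\<close> by (intro SUP_mono') (auto intro: SUP_subset_mono)
    finally have "cap p \<P> X \<le> S + cap_lsc p \<P> g + cap_lsc p \<P> g"
      by (simp add: add_right_mono add_left_mono)
    also have "\<dots> \<le> S + ennreal (e / 2) + ennreal (e / 2)"
      using g(3) by (intro add_mono) auto
    finally show "cap p \<P> X \<le> S + ennreal e"
      using \<open>0 < e\<close> by (simp add: add.assoc flip: ennreal_plus)
  qed
qed

definition open_bump :: "'a::metric_space set \<Rightarrow> nat \<Rightarrow> 'a \<Rightarrow> real" where
  "open_bump U k x = min 1 (real k * infdist x (- U))"

lemma open_bump_Cb: "open_bump U k \<in> Cb"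
proof -
  have "continuous_on UNIV (open_bump U k)"
    unfolding open_bump_def by (intro continuous_intros continuous_on_infdist continuous_on_id)
  moreover have "\<bar>open_bump U k x\<bar> \<le> 1" for x
    by (simp add: open_bump_def infdist_nonneg)
  ultimately show ?thesis
    unfolding Cb_def bounded_real by blast
qed

lemma open_bump_nonneg: "0 \<le> open_bump U k x"
  by (simp add: open_bump_def infdist_nonneg)

lemma SUP_open_bump:
  assumes "open U" "U \<noteq> UNIV"
  shows "(SUP k. ennreal (open_bump U k x)) = indicator U x"
proof (cases "x \<in> U")
  case True
  then have "0 < infdist x (- U)"
    using assms by (intro infdist_pos_not_in_closed) auto
  then obtain k :: nat where "1 \<le> real k * infdist x (- U)"
    by (metis reals_Archimedean2 less_eq_real_def pos_divide_less_eq mult.commute divide_less_eq_1)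
  then have "open_bump U k x = 1" by (simp add: open_bump_def)
  then have "1 \<le> (SUP k. ennreal (open_bump U k x))"
    by (metis SUP_upper UNIV_I ennreal_1)
  moreover have "(SUP k. ennreal (open_bump U k x)) \<le> 1"
    by (intro SUP_least) (simp add: open_bump_def)
  ultimately show ?thesis using True by simp
qed (simp add: open_bump_def)

lemma emeasure_eq_SUP_integral_open_bump:
  assumes M: "M \<in> borel_prob_measures" and "open U" "U \<noteq> UNIV"
  shows "emeasure M U = (SUP k. ennreal (integral\<^sup>L M (open_bump U k)))"
proof -
  have sets: "sets M = sets borel" using M by (simp add: borel_prob_measures_def)
  have inc: "incseq (\<lambda>k x. ennreal (open_bump U k x))"
    unfolding open_bump_def
    by (intro incseq_SucI le_funI ennreal_leI min.mono order_refl mult_right_mono) (auto simp: infdist_nonneg)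
  have "emeasure M U = (\<integral>\<^sup>+ x. indicator U x \<partial>M)"
    using sets \<open>open U\<close> by simp
  also have "\<dots> = (\<integral>\<^sup>+ x. (SUP k. ennreal (open_bump U k x)) \<partial>M)"
    using assms by (simp add: SUP_open_bump)
  also have "\<dots> = (SUP k. \<integral>\<^sup>+ x. ennreal (open_bump U k x) \<partial>M)"
    using Cb_borel_measurable[OF open_bump_Cb sets]
    by (intro nn_integral_monotone_convergence_SUP[OF inc]) simp
  also have "\<dots> = (SUP k. ennreal (integral\<^sup>L M (open_bump U k)))"
    using M by (simp add: nn_integral_Cb_eq_integral open_bump_Cb open_bump_nonneg)
  finally show ?thesis .
qed

lemma countable_Int_stable_open_generator:
  obtains E :: "'a::second_countable_topology set set"
  where "countable E" "Int_stable E" "UNIV \<in> E" "\<And>U. U \<in> E \<Longrightarrow> open U"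
    "sets borel = sigma_sets UNIV E"
proof -
  obtain B :: "'a set set" where B: "countable B" "topological_basis B"
    using ex_countable_basis by blast
  define E where "E = Inter ` {F. finite F \<and> F \<subseteq> B}"
  have "countable E"
    unfolding E_def using B(1) by (intro countable_image countable_Collect_finite_subset)
  moreover have "UNIV \<in> E"
    unfolding E_def by (intro image_eqI[of _ _ "{}"]) auto
  moreover have "Int_stable E"
  proof (rule Int_stableI)
    fix a b assume "a \<in> E" "b \<in> E"
    then obtain F G where "finite F" "F \<subseteq> B" "a = \<Inter>F" "finite G" "G \<subseteq> B" "b = \<Inter>G"
      unfolding E_def by auto
    then show "a \<inter> b \<in> E"
      unfolding E_def by (intro image_eqI[of _ _ "F \<union> G"]) auto
  qed
  moreover have open_E: "open U" if "U \<in> E" for U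
    using that topological_basis_open[OF B(2)] unfolding E_def by (auto intro!: open_Inter)
  moreover have "sets borel = sigma_sets UNIV E"
  proof -
    have "sets borel = sigma_sets UNIV B"
      unfolding borel_eq_countable_basis[OF B] by simp
    also have "\<dots> \<subseteq> sigma_sets UNIV E"
      unfolding E_def by (intro sigma_sets_mono') (auto intro!: image_eqI[of _ _ "{b}" for b])
    finally show ?thesis
      using open_E sigma_sets_le_sets_iff[of borel E] by auto
  qed
  ultimately show ?thesis
    using that by blast
qed

lemma borel_prob_measures_eqI_generator:
  assumes M: "M \<in> borel_prob_measures" and N: "N \<in> borel_prob_measures"
    and E: "Int_stable E" "UNIV \<in> E" "sets borel = sigma_sets UNIV E"
    and eq: "\<And>U. U \<in> E \<Longrightarrow> U \<noteq> UNIV \<Longrightarrow> emeasure M U = emeasure N U"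
  shows "M = N"
proof -
  have sets: "sets M = sigma_sets UNIV E" "sets N = sigma_sets UNIV E"
    using M N E(3) by (auto simp: borel_prob_measures_def)
  have "emeasure M UNIV = 1" "emeasure N UNIV = 1"
    using M N prob_space.emeasure_space_1[of M] prob_space.emeasure_space_1[of N]
    by (auto simp: borel_prob_measures_def dest: sets_eq_imp_space_eq)
  then have emeasure_eq: "emeasure M U = emeasure N U" if "U \<in> E" for U
    using eq[OF that] by (cases "U = UNIV") simp_all
  show "M = N"
    by (rule measure_eqI_generator_eq_countable[OF E(1) _ emeasure_eq sets, of "{UNIV}"])
       (use E(2) \<open>emeasure M UNIV = 1\<close> in auto)
qed

lemma Cb_separating_sequence:
  obtains d :: "nat \<Rightarrow> 'a::{metric_space, second_countable_topology} \<Rightarrow> real"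
  where "\<And>n. d n \<in> Cb" "inj_on (\<lambda>M n. integral\<^sup>L M (d n)) borel_prob_measures"
proof -
  obtain E :: "'a set set" where E: "countable E" "Int_stable E" "UNIV \<in> E"
    "\<And>U. U \<in> E \<Longrightarrow> open U" "sets borel = sigma_sets UNIV E"
    using countable_Int_stable_open_generator by blast
  define e where "e = from_nat_into (E \<times> (UNIV :: nat set))"
  have range_e: "range e = E \<times> UNIV"
    unfolding e_def using E(1,3) by (intro range_from_nat_into) auto
  define d where "d n = open_bump (fst (e n)) (snd (e n))" for n
  have "inj_on (\<lambda>M n. integral\<^sup>L M (d n)) borel_prob_measures"
  proof (rule inj_onI)
    fix M N :: "'a measure"
    assume M: "M \<in> borel_prob_measures" and N: "N \<in> borel_prob_measures"
      and eq: "(\<lambda>n. integral\<^sup>L M (d n)) = (\<lambda>n. integral\<^sup>L N (d n))"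
    have integral_eq: "integral\<^sup>L M (open_bump U k) = integral\<^sup>L N (open_bump U k)" if "U \<in> E" for U k
    proof -
      have "(U, k) \<in> range e"
        using range_e that by simp
      then obtain n where "e n = (U, k)"
        by (metis rangeE)
      then show ?thesis
        using fun_cong[OF eq, of n] by (simp add: d_def)
    qed
    show "M = N"
    proof (rule borel_prob_measures_eqI_generator[OF M N E(2,3,5)])
      fix U assume "U \<in> E" "U \<noteq> UNIV"
      then show "emeasure M U = emeasure N U"
        using emeasure_eq_SUP_integral_open_bump[OF M E(4) \<open>U \<noteq> UNIV\<close>]
          emeasure_eq_SUP_integral_open_bump[OF N E(4) \<open>U \<noteq> UNIV\<close>] integral_eq by simp
    qed
  qed
  moreover have "d n \<in> Cb" for n
    unfolding d_def by (rule open_bump_Cb)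
  ultimately show ?thesis
    using that by blast
qed

lemma second_countable_euclidean: "second_countable (euclidean :: 'a::second_countable_topology topology)"
proof -
  obtain B :: "'a set set" where B: "countable B" "topological_basis B"
    using ex_countable_basis by blast
  have "\<exists>V\<in>B. x \<in> V \<and> V \<subseteq> U" if "open U" "x \<in> U" for U x
    using topological_basisE[OF B(2) that] by blast
  then show ?thesis
    unfolding second_countable_def
    using B(1) topological_basis_open[OF B(2)] by (intro exI[of _ B]) simp
qed

lemma countable_dense_subset:
  fixes S :: "'a::second_countable_topology set"
  obtains T where "countable T" "T \<subseteq> S" "S \<subseteq> closure T"
proof -
  have "separable_space (subtopology euclidean S)"
    by (intro second_countable_imp_separable_space second_countable_subtopology second_countable_euclidean)
  then obtain T where "countable T" "T \<subseteq> S" "S \<inter> closure (S \<inter> T) = S"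
    unfolding separable_space_def closure_of_subtopology by auto
  moreover from this have "S \<subseteq> closure T"
    by (metis Int_absorb1 inf.cobounded2)
  ultimately show ?thesis
    using that by blast
qed

lemma topspace_weak_topology: "topspace weak_topology = borel_prob_measures"
  unfolding weak_topology_def topspace_pullback_topology by (auto simp: PiE_def)

lemma continuous_map_weak_integral:
  assumes "g \<in> Cb"
  shows "continuous_map weak_topology euclideanreal (\<lambda>M. integral\<^sup>L M g)"
proof -
  have "continuous_map weak_topology euclideanreal ((\<lambda>y. y g) \<circ> (\<lambda>M. \<lambda>f\<in>Cb. integral\<^sup>L M f))"
    unfolding weak_topology_def
    by (rule continuous_map_pullback) (rule continuous_map_product_projection[OF assms])
  moreover have "(\<lambda>y. y g) \<circ> (\<lambda>M. \<lambda>f\<in>Cb. integral\<^sup>L M f) = (\<lambda>M. integral\<^sup>L M g)"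
    using assms by (auto simp: fun_eq_iff)
  ultimately show ?thesis by simp
qed

lemma sup_integral_dense_if_dense_image:
  fixes F :: "'a::topological_space measure \<Rightarrow> 'b::t2_space"
  assumes P: "\<P> \<subseteq> borel_prob_measures" and "weakly_rel_compact \<P>" and "\<Q> \<subseteq> \<P>"
    and F_cont: "continuous_map weak_topology euclidean F" and F_inj: "inj_on F borel_prob_measures"
    and F_dense: "F ` \<P> \<subseteq> closure (F ` \<Q>)"
  shows "sup_integral_dense \<Q> \<P>"
  unfolding sup_integral_dense_def
proof (intro ballI allI impI, rule ccontr)
  fix g M t assume g: "g \<in> Cb" and M: "M \<in> \<P>" and t: "t < integral\<^sup>L M g"
    and "\<not> (\<exists>N\<in>\<Q>. t < integral\<^sup>L N g)"
  then have \<Q>_le: "integral\<^sup>L N g \<le> t" if "N \<in> \<Q>" for N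
    using that by (auto simp: not_less)
  define K where "K = weak_topology closure_of \<P>"
  define C where "C = K \<inter> {N \<in> topspace weak_topology. integral\<^sup>L N g \<in> {..t}}"
  have "closedin weak_topology C"
    unfolding C_def K_def using continuous_map_weak_integral[OF g]
    by (intro closedin_Int closedin_closure_of closedin_continuous_map_preimage) auto
  then have "compactin weak_topology C"
    using \<open>weakly_rel_compact \<P>\<close> unfolding weakly_rel_compact_def
    by (rule closed_compactin[rotated 2]) (simp add: C_def K_def)
  then have "compactin euclidean (F ` C)"
    by (rule image_compactin[OF _ F_cont])
  then have "closed (F ` C)"
    by (simp add: compact_imp_closed)
  moreover have "\<P> \<subseteq> K"
    unfolding K_def using P by (intro closure_of_subset) (simp add: topspace_weak_topology)
  then have "\<Q> \<subseteq> C"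
    using \<open>\<Q> \<subseteq> \<P>\<close> P \<Q>_le by (auto simp: C_def topspace_weak_topology)
  ultimately have "closure (F ` \<Q>) \<subseteq> F ` C"
    by (intro closure_minimal image_mono)
  then obtain N where N: "N \<in> C" "F M = F N"
    using M F_dense by blast
  then have "N \<in> borel_prob_measures"
    by (simp add: C_def topspace_weak_topology)
  then have "M = N"
    using inj_onD[OF F_inj N(2)] M P by blast
  then show False
    using N(1) t by (simp add: C_def)
qed

lemma exists_countable_sup_integral_dense:
  fixes \<P> :: "'a::{metric_space, second_countable_topology} measure set"
  assumes "\<P> \<subseteq> borel_prob_measures" and "weakly_rel_compact \<P>"
  obtains \<Q> where "countable \<Q>" "\<Q> \<subseteq> \<P>" "sup_integral_dense \<Q> \<P>"
proof -
  obtain d :: "nat \<Rightarrow> 'a \<Rightarrow> real"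
    where d: "\<And>n. d n \<in> Cb" and F_inj: "inj_on (\<lambda>M n. integral\<^sup>L M (d n)) borel_prob_measures"
    using Cb_separating_sequence by blast
  define F where "F M = (\<lambda>n. integral\<^sup>L M (d n))" for M :: "'a measure"
  have F_cont: "continuous_map weak_topology euclidean F"
    unfolding euclidean_product_topology[symmetric] continuous_map_componentwise_UNIV F_def
    using continuous_map_weak_integral[OF d] by simp
  obtain T where T: "countable T" "T \<subseteq> F ` \<P>" "F ` \<P> \<subseteq> closure T"
    by (rule countable_dense_subset)
  define \<Q> where "\<Q> = inv_into \<P> F ` T"
  have "\<Q> \<subseteq> \<P>" and "F ` \<Q> = T"
    using T(2) by (auto simp: \<Q>_def inv_into_into image_inv_into_cancel)
  then have "sup_integral_dense \<Q> \<P>"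
    using assms F_cont F_inj T(3) unfolding F_def by (intro sup_integral_dense_if_dense_image) auto
  with \<open>\<Q> \<subseteq> \<P>\<close> show ?thesis
    using that T(1) by (metis \<Q>_def countable_image)
qed

theorem theorem4p3:
  fixes \<P> :: "'a::polish_space measure set"
  assumes "\<P> \<subseteq> borel_prob_measures"
    and "weakly_rel_compact \<P>"
  shows "\<exists>\<Q>. countable \<Q> \<and> \<Q> \<subseteq> \<P> \<and>
           (\<forall>p::real. 1 \<le> p \<longrightarrow>
              (\<forall>X\<in>L1_set p \<P>. cap p \<P> X = (SUP Pn\<in>\<Q>. Epow p Pn X))
              \<and> cap p \<P> = cap p \<Q> \<and> L1_set p \<P> = L1_set p \<Q>)"
proof -
  obtain \<Q> where \<Q>: "countable \<Q>" "\<Q> \<subseteq> \<P>"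
    and dense: "sup_integral_dense \<Q> \<P>"
    using exists_countable_sup_integral_dense[OF assms] by blast
  have "(\<forall>X\<in>L1_set p \<P>. cap p \<P> X = (SUP Pn\<in>\<Q>. Epow p Pn X))
      \<and> cap p \<P> = cap p \<Q> \<and> L1_set p \<P> = L1_set p \<Q>" if p: "1 \<le> p" for p :: real
  proof -
    have "cap p \<P> = cap p \<Q>"
      using p by (intro cap_eq_if_sup_integral_dense[OF _ \<Q>(2) assms(1) dense]) auto
    then show ?thesis
      using cap_eq_SUP_Epow_if_sup_integral_dense[OF p \<Q>(2) assms(1) dense] by (simp add: L1_set_def)
  qed
  with \<Q> show ?thesis by blast
qed

end
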